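(* Assume $l>1$. For every partition $\mu$ and every $i\in\mathbb{Z}/l\mathbb{Z}$ one has $\mathfrak{d}(\sigma_i*\mu)=\sigma_i*\mathfrak{d}(\mu)$. That is, the map $\mathfrak{d}:\mathcal{P}\to\mathbb{Z}^l$ is $\tilde S_l$-equivariant. The same holds for its restriction $\mathfrak{d}:\heartsuit(l)\to\mathbb{Z}_{\heartsuit}$ to $l$-cores.
   Context: Partitions are identified with Young diagrams $\mathbb{Y}(\mu)=\{(i,j):1\le j\le\mu_i\}$ (English convention). The content of a cell $(i,j)$ is $c(i,j)=j-i$. For a partition $\lambda$ let $N_i(\lambda)$ ($i\in\{0,\dots,l-1\}$) be the number of cells of $\lambda$ of content $\equiv i \pmod l$, and put $\mathfrak{d}(\lambda)=\mathbf{d}_\lambda=(N_0(\lambda),\dots,N_{l-1}(\lambda))$. Let $\mathcal{P}$ be the set of all partitions and $\heartsuit(l)$ the set of $l$-cores (partitions from which no rim-hook of $l$ cells can be removed). Let $\mathbb{Z}_\heartsuit=\{\mathbf{d}_\nu:\nu\in\heartsuit(l)\}$. The affine symmetric group $\tilde S_l$ has Coxeter generators $\sigma_0,\dots,\sigma_{l-1}$ (indices mod $l$) with relations $\sigma_i^2=1$ and $\sigma_i\sigma_{i+1}\sigma_i=\sigma_{i+1}\sigma_i\sigma_{i+1}$. It acts on $\mathcal{P}$ by $\sigma_i*\mu=\mathbf{T}_i(\mu)$. Here $\mathbb{Y}(\mathbf{T}_i(\mu))$ is obtained from $\mathbb{Y}(\mu)$ by adding all addable cells of content $\equiv i\pmod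 l$ and removing all removable cells of content $\equiv i \pmod l$ (a cell is removable if deleting it leaves a Young diagram, and addable if it is not in the diagram and adding it gives a Young diagram). It acts on $\mathbb{Z}^l$ by $\sigma_i*\mathbf{d}=\mathbf{d}'$, where $d'_j=d_j$ for $j\ne i$, $d'_i=d_{i+1}+d_{i-1}-d_i$ if $i\neq0$, and $d'_0=d_1+d_{l-1}-d_0+1$. *)

theory Defs
  imports Main
begin

text \<open>Partitions are identified with their Young diagrams (English convention):
  finite sets of cells (i,j) with i,j >= 1, closed downwards in both coordinates.\<close>

type_synonym cell = "nat \<times> nat"

definition is_young :: "cell set \<Rightarrow> bool" where
  "is_young D \<longleftrightarrow> finite D \<and> (\<forall>(i,j)\<in>D. 1 \<le> i \<and> 1 \<le> j) \<and>
     (\<forall>(i,j)\<in>D. \<forall>i' j'. 1 \<le> i' \<and> i' \<le> i \<and> 1 \<le> j' \<and> j' \<le> j \<longrightarrow> (i',j') \<in> D)"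

definition content :: "cell \<Rightarrow> int" where
  "content c = int (snd c) - int (fst c)"

definition has_res :: "nat \<Rightarrow> nat \<Rightarrow> cell \<Rightarrow> bool" where
  "has_res l k c \<longleftrightarrow> content c mod int l = int k mod int l"

definition removable :: "cell set \<Rightarrow> cell \<Rightarrow> bool" where
  "removable D c \<longleftrightarrow> c \<in> D \<and> is_young (D - {c})"

definition addable :: "cell set \<Rightarrow> cell \<Rightarrow> bool" where
  "addable D c \<longleftrightarrow> c \<notin> D \<and> is_young (insert c D)"

definition T_op :: "nat \<Rightarrow> nat \<Rightarrow> cell set \<Rightarrow> cell set" where
  "T_op l i D = (D - {c. removable D c \<and> has_res l i c}) \<union> {c. addable D c \<and> has_res l i c}"

definition N_cnt :: "nat \<Rightarrow> nat \<Rightarrow> cell set \<Rightarrow> int" where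
  "N_cnt l k D = int (card {c\<in>D. has_res l k c})"

definition dvec :: "nat \<Rightarrow> cell set \<Rightarrow> int list" where
  "dvec l D = map (\<lambda>k. N_cnt l k D) [0..<l]"

definition sigma_vec :: "nat \<Rightarrow> nat \<Rightarrow> int list \<Rightarrow> int list" where
  "sigma_vec l i d = d[i := d ! ((i + 1) mod l) + d ! ((i + l - 1) mod l) - d ! i
                          + (if i = 0 then 1 else 0)]"

definition adjacent :: "cell \<Rightarrow> cell \<Rightarrow> bool" where
  "adjacent a b \<longleftrightarrow> (fst a = fst b \<and> (snd b = snd a + 1 \<or> snd a = snd b + 1)) \<or>
                     (snd a = snd b \<and> (fst b = fst a + 1 \<or> fst a = fst b + 1))"

definition edge_connected :: "cell set \<Rightarrow> bool" where
  "edge_connected S \<longleftrightarrow> (\<forall>a\<in>S. \<forall>b\<in>S. (\<lambda>x y. x \<in> S \<and> y \<in> S \<and> adjacent x y)\<^sup>*\<^sup>* a b)"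

definition is_rim_hook :: "cell set \<Rightarrow> cell set \<Rightarrow> bool" where
  "is_rim_hook D S \<longleftrightarrow> S \<noteq> {} \<and> S \<subseteq> D \<and> is_young (D - S) \<and> edge_connected S \<and>
     \<not> (\<exists>i j. (i,j) \<in> S \<and> (i+1,j) \<in> S \<and> (i,j+1) \<in> S \<and> (i+1,j+1) \<in> S)"

definition is_core :: "nat \<Rightarrow> cell set \<Rightarrow> bool" where
  "is_core l D \<longleftrightarrow> is_young D \<and> \<not> (\<exists>S. is_rim_hook D S \<and> card S = l)"

definition Z_heart :: "nat \<Rightarrow> int list set" where
  "Z_heart l = {dvec l \<nu> | \<nu>. is_core l \<nu>}"

end

theory Submission
  imports Defs
begin

text \<open>A Young diagram is recorded by its diagonal lengths f k, the number of cells of content k.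
  On a diagonal of residue i the operator T_i replaces f k by
  f (k - 1) + f (k + 1) - f k + [k = 0], which is exactly the reflection sigma_i applied
  diagonal by diagonal; summing over the residue class gives the equivariance of d.

  For cores, read the boundary of the diagram as a sequence of unit steps indexed by the
  integers. A rim hook of length l is the same thing as a rightward step at position c + 1 - l
  together with an upward step at position c + 1, and T_i merely exchanges the steps at the
  positions congruent to i and i + 1 modulo l. This exchange commutes with translation by l,
  so T_i maps diagrams without rim hooks of length l to diagrams without them.\<close>

section \<open>Diagonal lengths\<close>

text \<open>diag_cell k t is the t-th cell, counted from the top left, on the diagonal of content k;
  the cell (a, b) is the (min a b)-th cell of its diagonal.\<close>

definition diag_cell :: "int \<Rightarrow> nat \<Rightarrow> cell" where
  "diag_cell k t = (t + nat (-k), t + nat k)"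

definition diag_len :: "cell set \<Rightarrow> int \<Rightarrow> nat" where
  "diag_len D k = card {c\<in>D. content c = k}"

definition diag_diagram :: "(int \<Rightarrow> nat) \<Rightarrow> cell set" where
  "diag_diagram f = {(a, b). 1 \<le> a \<and> 1 \<le> b \<and> min a b \<le> f (int b - int a)}"

text \<open>The boundary of a diagram, walked from south-west to north-east, passes between the
  diagonals of contents k - 1 and k either upwards (value 0) or rightwards (value -1).\<close>

definition boundary_step :: "(int \<Rightarrow> nat) \<Rightarrow> int \<Rightarrow> int" where
  "boundary_step f k = int (f (k - 1)) - int (f k) - (if 1 \<le> k then 1 else 0)"

definition diag_profile :: "(int \<Rightarrow> nat) \<Rightarrow> bool" where
  "diag_profile f \<longleftrightarrow> (\<forall>k. boundary_step f k = 0 \<or> boundary_step f k = -1) \<and> finite {k. f k \<noteq> 0}"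

lemma young_downward:
  assumes "is_young D" "(a, b) \<in> D" "1 \<le> a'" "a' \<le> a" "1 \<le> b'" "b' \<le> b"
  shows "(a', b') \<in> D"
  using assms unfolding is_young_def by blast

lemma young_cell_pos:
  assumes "is_young D" "(a, b) \<in> D"
  shows "1 \<le> a" "1 \<le> b"
  using assms unfolding is_young_def by auto

lemma young_finite: "is_young D \<Longrightarrow> finite D"
  unfolding is_young_def by auto

lemma content_diag_cell [simp]: "content (diag_cell k t) = k"
  unfolding diag_cell_def content_def by auto

lemma diag_cell_min: "diag_cell (int b - int a) (min a b) = (a, b)"
  unfolding diag_cell_def by auto

lemma diag_cell_eq_iff: "(a, b) = diag_cell k t \<longleftrightarrow> k = int b - int a \<and> t = min a b"
  unfolding diag_cell_def by auto

lemma inj_on_diag_cell: "inj_on (diag_cell k) A"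
  unfolding diag_cell_def inj_on_def by auto

lemma card_image_diag_cell [simp]: "card (diag_cell k ` A) = card A"
  by (rule card_image[OF inj_on_diag_cell])

lemma boundary_step_cases:
  "diag_profile f \<Longrightarrow> boundary_step f k = 0 \<or> boundary_step f k = -1"
  unfolding diag_profile_def by auto

lemma down_closed_eq_atLeastAtMost:
  fixes T :: "nat set"
  assumes "finite T" "\<And>t. t \<in> T \<Longrightarrow> 1 \<le> t"
    and "\<And>t t'. t \<in> T \<Longrightarrow> 1 \<le> t' \<Longrightarrow> t' \<le> t \<Longrightarrow> t' \<in> T"
  shows "T = {1..card T}"
proof (cases "T = {}")
  case False
  define n where "n = Max T"
  have "n \<in> T"
    using assms(1) False by (simp add: n_def)
  have "T = {1..n}"
  proof (intro equalityI subsetI)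
    show "t \<in> {1..n}" if "t \<in> T" for t
      using that assms(1,2) by (simp add: n_def)
    show "t \<in> T" if "t \<in> {1..n}" for t
      using that assms(3)[OF \<open>n \<in> T\<close>] by simp
  qed
  then show ?thesis
    by simp
qed simp

lemma diagonal_of_young:
  assumes Y: "is_young D"
  shows "{c\<in>D. content c = k} = diag_cell k ` {1..diag_len D k}"
proof -
  define T where "T = {t. 1 \<le> t \<and> diag_cell k t \<in> D}"
  have diag: "{c\<in>D. content c = k} = diag_cell k ` T"
  proof
    show "{c\<in>D. content c = k} \<subseteq> diag_cell k ` T"
    proof
      fix c assume c: "c \<in> {c\<in>D. content c = k}"
      obtain a b where ab: "c = (a, b)" by force
      have "1 \<le> a" "1 \<le> b" "k = int b - int a"
        using young_cell_pos[OF Y] c ab by (auto simp: content_def)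
      then show "c \<in> diag_cell k ` T"
        using c ab diag_cell_min[of b a] unfolding T_def by (intro image_eqI[of _ _ "min a b"]) auto
    qed
  qed (auto simp: T_def)
  have "finite T"
    using finite_vimageI[OF young_finite[OF Y] inj_on_diag_cell] by (rule rev_finite_subset) (auto simp: T_def)
  moreover have "T = {1..card T}"
  proof (rule down_closed_eq_atLeastAtMost[OF \<open>finite T\<close>])
    fix t t' assume "t \<in> T" "1 \<le> t'" "t' \<le> t"
    then show "t' \<in> T"
      unfolding T_def diag_cell_def
      using young_downward[OF Y, of "t + nat (-k)" "t + nat k" "t' + nat (-k)" "t' + nat k"] by auto
  qed (auto simp: T_def)
  moreover have "diag_len D k = card T"
    unfolding diag_len_def diag by simp
  ultimately show ?thesis
    using diag by simp
qed

lemma young_eq_diag_diagram: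
  assumes Y: "is_young D"
  shows "D = diag_diagram (diag_len D)"
proof (rule set_eqI)
  fix c :: cell
  obtain a b where ab: "c = (a, b)" by force
  have "c \<in> D \<longleftrightarrow> c \<in> {c\<in>D. content c = int b - int a}"
    using ab by (auto simp: content_def)
  also have "\<dots> \<longleftrightarrow> 1 \<le> a \<and> 1 \<le> b \<and> min a b \<le> diag_len D (int b - int a)"
    unfolding diagonal_of_young[OF Y] ab image_iff diag_cell_eq_iff by auto
  finally show "c \<in> D \<longleftrightarrow> c \<in> diag_diagram (diag_len D)"
    using ab by (simp add: diag_diagram_def)
qed

lemma mem_young_iff:
  "is_young D \<Longrightarrow> (a, b) \<in> D \<longleftrightarrow> 1 \<le> a \<and> 1 \<le> b \<and> min a b \<le> diag_len D (int b - int a)"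
  by (subst young_eq_diag_diagram) (simp_all add: diag_diagram_def)

lemma diag_len_diag_diagram [simp]: "diag_len (diag_diagram f) k = f k"
proof -
  have "{c\<in>diag_diagram f. content c = k} = diag_cell k ` {1..f k}"
  proof
    show "{c\<in>diag_diagram f. content c = k} \<subseteq> diag_cell k ` {1..f k}"
    proof
      fix c assume c: "c \<in> {c\<in>diag_diagram f. content c = k}"
      obtain a b where ab: "c = (a, b)" by force
      have "1 \<le> a" "1 \<le> b" "min a b \<le> f (int b - int a)" "k = int b - int a"
        using c ab unfolding diag_diagram_def content_def by auto
      then show "c \<in> diag_cell k ` {1..f k}"
        using ab diag_cell_min[of b a] by (intro image_eqI[of _ _ "min a b"]) auto
    qed
  qed (auto simp: diag_diagram_def diag_cell_def content_def)
  then show ?thesis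
    unfolding diag_len_def by simp
qed

lemma diag_len_step_right:
  assumes Y: "is_young D" and k: "1 \<le> k"
  shows "diag_len D k \<le> diag_len D (k - 1)" "diag_len D (k - 1) \<le> diag_len D k + 1"
proof -
  show "diag_len D k \<le> diag_len D (k - 1)"
  proof (cases "diag_len D k = 0")
    case False
    let ?t = "diag_len D k"
    have "(?t, ?t + nat k) \<in> D"
      using mem_young_iff[OF Y, of ?t "?t + nat k"] False k by simp
    then have "(?t, ?t + nat k - 1) \<in> D"
      using young_downward[OF Y, of ?t "?t + nat k" ?t "?t + nat k - 1"] False k by simp
    then show ?thesis
      using mem_young_iff[OF Y, of ?t "?t + nat k - 1"] k by simp
  qed simp
  show "diag_len D (k - 1) \<le> diag_len D k + 1"
  proof (cases "diag_len D (k - 1) \<le> 1")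
    case False
    let ?t = "diag_len D (k - 1)"
    have "(?t, ?t + nat (k - 1)) \<in> D"
      using mem_young_iff[OF Y, of ?t "?t + nat (k - 1)"] False k by simp
    then have "(?t - 1, ?t + nat (k - 1)) \<in> D"
      using young_downward[OF Y, of ?t "?t + nat (k - 1)" "?t - 1" "?t + nat (k - 1)"] False by simp
    then show ?thesis
      using mem_young_iff[OF Y, of "?t - 1" "?t + nat (k - 1)"] k False by (simp; linarith)
  qed simp
qed

lemma diag_len_step_left:
  assumes Y: "is_young D" and k: "k \<le> 0"
  shows "diag_len D (k - 1) \<le> diag_len D k" "diag_len D k \<le> diag_len D (k - 1) + 1"
proof -
  show "diag_len D (k - 1) \<le> diag_len D k"
  proof (cases "diag_len D (k - 1) = 0")
    case False
    let ?t = "diag_len D (k - 1)"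
    have "(?t + nat (1 - k), ?t) \<in> D"
      using mem_young_iff[OF Y, of "?t + nat (1 - k)" ?t] False k by simp
    then have "(?t + nat (1 - k) - 1, ?t) \<in> D"
      using young_downward[OF Y, of "?t + nat (1 - k)" ?t "?t + nat (1 - k) - 1" ?t] False k by simp
    then show ?thesis
      using mem_young_iff[OF Y, of "?t + nat (1 - k) - 1" ?t] k by simp
  qed simp
  show "diag_len D k \<le> diag_len D (k - 1) + 1"
  proof (cases "diag_len D k \<le> 1")
    case False
    let ?t = "diag_len D k"
    have "(?t + nat (-k), ?t) \<in> D"
      using mem_young_iff[OF Y, of "?t + nat (-k)" ?t] False k by simp
    then have "(?t + nat (-k), ?t - 1) \<in> D"
      using young_downward[OF Y, of "?t + nat (-k)" ?t "?t + nat (-k)" "?t - 1"] False by simp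
    then show ?thesis
      using mem_young_iff[OF Y, of "?t + nat (-k)" "?t - 1"] k False by (simp; linarith)
  qed simp
qed

lemma diag_profile_diag_len:
  assumes Y: "is_young D"
  shows "diag_profile (diag_len D)"
  unfolding diag_profile_def
proof
  show "\<forall>k. boundary_step (diag_len D) k = 0 \<or> boundary_step (diag_len D) k = -1"
  proof
    fix k :: int
    show "boundary_step (diag_len D) k = 0 \<or> boundary_step (diag_len D) k = -1"
      using diag_len_step_right[OF Y, of k] diag_len_step_left[OF Y, of k]
      unfolding boundary_step_def by (cases "1 \<le> k") auto
  qed
  have "{k. diag_len D k \<noteq> 0} \<subseteq> content ` D"
    unfolding diag_len_def by (auto simp: young_finite[OF Y])
  then show "finite {k. diag_len D k \<noteq> 0}"
    using young_finite[OF Y] finite_surj by blast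
qed

lemma downward_closed_if_unit_steps:
  fixes D :: "cell set"
  assumes "(i, j) \<in> D"
    and up: "\<And>a b. (a, b) \<in> D \<Longrightarrow> 2 \<le> a \<Longrightarrow> (a - 1, b) \<in> D"
    and left: "\<And>a b. (a, b) \<in> D \<Longrightarrow> 2 \<le> b \<Longrightarrow> (a, b - 1) \<in> D"
    and "1 \<le> i'" "i' \<le> i" "1 \<le> j'" "j' \<le> j"
  shows "(i', j') \<in> D"
proof -
  from \<open>i' \<le> i\<close> \<open>(i, j) \<in> D\<close> have "(i', j) \<in> D"
  proof (induction rule: inc_induct)
    case (step n)
    then show ?case using up[of "Suc n" j] \<open>1 \<le> i'\<close> by simp
  qed
  with \<open>j' \<le> j\<close> show ?thesis
  proof (induction rule: inc_induct)
    case (step n)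
    then show ?case using left[of i' "Suc n"] \<open>1 \<le> j'\<close> by simp
  qed
qed

lemma is_young_diag_diagram:
  assumes P: "diag_profile f"
  shows "is_young (diag_diagram f)"
proof -
  have "diag_diagram f \<subseteq> (\<Union>k\<in>{k. f k \<noteq> 0}. diag_cell k ` {1..f k})"
  proof
    fix c assume c: "c \<in> diag_diagram f"
    obtain a b where ab: "c = (a, b)" by force
    have "1 \<le> min a b" "min a b \<le> f (int b - int a)"
      using c ab unfolding diag_diagram_def by auto
    then show "c \<in> (\<Union>k\<in>{k. f k \<noteq> 0}. diag_cell k ` {1..f k})"
      using ab diag_cell_min[of b a] by (intro UN_I[of "int b - int a"] image_eqI[of _ _ "min a b"]) auto
  qed
  moreover have "finite (\<Union>k\<in>{k. f k \<noteq> 0}. diag_cell k ` {1..f k})"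
    using P unfolding diag_profile_def by auto
  ultimately have fin: "finite (diag_diagram f)"
    by (rule finite_subset)
  have up: "(a - 1, b) \<in> diag_diagram f" if "(a, b) \<in> diag_diagram f" "2 \<le> a" for a b
  proof -
    have e: "int b - int (a - 1) = (int b - int a) + 1" "int b - (int a - 1) = (int b - int a) + 1"
      using that by auto
    show ?thesis
      using that boundary_step_cases[OF P, of "int b - int a + 1"]
      unfolding diag_diagram_def boundary_step_def by (auto simp: e split: if_splits)
  qed
  have left: "(a, b - 1) \<in> diag_diagram f" if "(a, b) \<in> diag_diagram f" "2 \<le> b" for a b
  proof -
    have e: "int (b - 1) - int a = (int b - int a) - 1" "int b - 1 - int a = (int b - int a) - 1"
      using that by auto
    show ?thesis
      using that boundary_step_cases[OF P, of "int b - int a"]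
      unfolding diag_diagram_def boundary_step_def by (auto simp: e split: if_splits)
  qed
  show ?thesis
    unfolding is_young_def
    using fin downward_closed_if_unit_steps[of _ _ "diag_diagram f", OF _ up left]
    by (auto simp: diag_diagram_def)
qed

section \<open>The operators T_i on diagonals\<close>

lemma removable_young_iff:
  assumes Y: "is_young D"
  shows "removable D (a, b) \<longleftrightarrow> (a, b) \<in> D \<and> (a + 1, b) \<notin> D \<and> (a, b + 1) \<notin> D"
proof
  assume "removable D (a, b)"
  then have c: "(a, b) \<in> D" and Y': "is_young (D - {(a, b)})"
    unfolding removable_def by auto
  have "1 \<le> a" "1 \<le> b"
    using young_cell_pos[OF Y c] by auto
  then show "(a, b) \<in> D \<and> (a + 1, b) \<notin> D \<and> (a, b + 1) \<notin> D"
    using c young_downward[OF Y', of "a + 1" b a b] young_downward[OF Y', of a "b + 1" a b] by auto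
next
  assume h: "(a, b) \<in> D \<and> (a + 1, b) \<notin> D \<and> (a, b + 1) \<notin> D"
  have "(i', j') \<in> D - {(a, b)}"
    if "(i, j) \<in> D - {(a, b)}" "1 \<le> i'" "i' \<le> i" "1 \<le> j'" "j' \<le> j" for i j i' j'
  proof -
    have "(i', j') \<in> D"
      using young_downward[OF Y, of i j i' j'] that by auto
    moreover have "(i', j') \<noteq> (a, b)"
    proof
      assume e: "(i', j') = (a, b)"
      then have "a + 1 \<le> i \<or> b + 1 \<le> j"
        using that by auto
      then show False
        using young_downward[OF Y, of i j "a + 1" b] young_downward[OF Y, of i j a "b + 1"] that e h
        by auto
    qed
    ultimately show ?thesis by simp
  qed
  then have "is_young (D - {(a, b)})"
    using Y unfolding is_young_def by blast
  then show "removable D (a, b)"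
    using h unfolding removable_def by auto
qed

lemma addable_young_iff:
  assumes Y: "is_young D"
  shows "addable D (a, b) \<longleftrightarrow> (a, b) \<notin> D \<and> 1 \<le> a \<and> 1 \<le> b \<and>
    (2 \<le> a \<longrightarrow> (a - 1, b) \<in> D) \<and> (2 \<le> b \<longrightarrow> (a, b - 1) \<in> D)"
proof
  assume "addable D (a, b)"
  then have c: "(a, b) \<notin> D" and Y': "is_young (insert (a, b) D)"
    unfolding addable_def by auto
  have pos: "1 \<le> a" "1 \<le> b"
    using young_cell_pos[OF Y', of a b] by auto
  have "(a - 1, b) \<in> D" if "2 \<le> a"
  proof -
    have "(a - 1, b) \<in> insert (a, b) D"
      using young_downward[OF Y', of a b "a - 1" b] pos that by simp
    then show ?thesis
      using that by auto
  qed
  moreover have "(a, b - 1) \<in> D" if "2 \<le> b"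
  proof -
    have "(a, b - 1) \<in> insert (a, b) D"
      using young_downward[OF Y', of a b a "b - 1"] pos that by simp
    then show ?thesis
      using that by auto
  qed
  ultimately show "(a, b) \<notin> D \<and> 1 \<le> a \<and> 1 \<le> b \<and> (2 \<le> a \<longrightarrow> (a - 1, b) \<in> D) \<and> (2 \<le> b \<longrightarrow> (a, b - 1) \<in> D)"
    using c pos by blast
next
  assume h: "(a, b) \<notin> D \<and> 1 \<le> a \<and> 1 \<le> b \<and> (2 \<le> a \<longrightarrow> (a - 1, b) \<in> D) \<and> (2 \<le> b \<longrightarrow> (a, b - 1) \<in> D)"
  have "(i', j') \<in> insert (a, b) D"
    if "(i, j) \<in> insert (a, b) D" "1 \<le> i'" "i' \<le> i" "1 \<le> j'" "j' \<le> j" for i j i' j'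
  proof (cases "(i, j) \<in> D \<or> (i', j') = (a, b)")
    case True
    then show ?thesis
      using young_downward[OF Y, of i j i' j'] that by auto
  next
    case False
    then have "i = a" "j = b" "i' \<le> a - 1 \<or> j' \<le> b - 1"
      using that by auto
    then show ?thesis
      using young_downward[OF Y, of "a - 1" b i' j'] young_downward[OF Y, of a "b - 1" i' j'] h that
      by auto
  qed
  then have "is_young (insert (a, b) D)"
    using Y h unfolding is_young_def by auto
  then show "addable D (a, b)"
    using h unfolding addable_def by auto
qed

lemma mem_T_op_iff:
  assumes Y: "is_young D" and res: "has_res l i (a, b)"
  shows "(a, b) \<in> T_op l i D \<longleftrightarrow> 1 \<le> a \<and> 1 \<le> b \<and>
    (((a, b) \<in> D \<and> ((a + 1, b) \<in> D \<or> (a, b + 1) \<in> D)) \<or>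
     ((a, b) \<notin> D \<and> (2 \<le> a \<longrightarrow> (a - 1, b) \<in> D) \<and> (2 \<le> b \<longrightarrow> (a, b - 1) \<in> D)))"
  using res young_cell_pos[OF Y, of a b]
  by (auto simp: T_op_def removable_young_iff[OF Y] addable_young_iff[OF Y])

lemma mem_T_op_other_res:
  "\<not> has_res l i c \<Longrightarrow> c \<in> T_op l i D \<longleftrightarrow> c \<in> D"
  unfolding T_op_def by auto

definition diag_reflect :: "nat \<Rightarrow> nat \<Rightarrow> (int \<Rightarrow> nat) \<Rightarrow> int \<Rightarrow> nat" where
  "diag_reflect l i f k =
    (if k mod int l = int i
     then nat (int (f (k - 1)) + int (f (k + 1)) - int (f k) + (if k = 0 then 1 else 0))
     else f k)"

lemma of_nat_diag_reflect:
  assumes P: "diag_profile f"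
  shows "int (diag_reflect l i f k) =
    (if k mod int l = int i
     then int (f (k - 1)) + int (f (k + 1)) - int (f k) + (if k = 0 then 1 else 0)
     else int (f k))"
proof -
  have "0 \<le> int (f (k - 1)) + int (f (k + 1)) - int (f k) + (if k = 0 then 1 else 0)"
    using boundary_step_cases[OF P, of k] boundary_step_cases[OF P, of "k + 1"]
    unfolding boundary_step_def by (cases "k = 0") (auto split: if_splits)
  then show ?thesis
    unfolding diag_reflect_def by simp
qed

lemma diag_reflect_nonzero:
  assumes "diag_profile f" "diag_reflect l i f k \<noteq> 0"
  shows "k = 0 \<or> f (k - 1) \<noteq> 0 \<or> f k \<noteq> 0 \<or> f (k + 1) \<noteq> 0"
  using assms(2) of_nat_diag_reflect[OF assms(1), of l i k] by (auto split: if_splits)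

text \<open>Here x, y and z stand for the lengths of the diagonals of contents k - 1, k and k + 1.\<close>

lemma T_op_cell_arith:
  fixes a b x y z :: nat and k :: int
  assumes "1 \<le> a" "1 \<le> b" "k = int b - int a"
    and "int x - int y - (if 1 \<le> k then 1 else 0) \<in> {0, -1}"
    and "int y - int z - (if 0 \<le> k then 1 else 0) \<in> {0, -1}"
  shows "((min a b \<le> y \<and> (min (a + 1) b \<le> x \<or> min a (b + 1) \<le> z)) \<or>
          (\<not> min a b \<le> y \<and> (2 \<le> a \<longrightarrow> min (a - 1) b \<le> z) \<and> (2 \<le> b \<longrightarrow> min a (b - 1) \<le> x)))
     \<longleftrightarrow> int (min a b) \<le> int x + int z - int y + (if k = 0 then 1 else 0)"
  using assms by (auto simp: min_def split: if_splits)

lemma mem_T_op_diag_iff: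
  assumes Y: "is_young D" and res: "has_res l i (a, b)" and pos: "1 \<le> a" "1 \<le> b"
    and k: "k = int b - int a"
  shows "(a, b) \<in> T_op l i D \<longleftrightarrow> int (min a b) \<le>
    int (diag_len D (k - 1)) + int (diag_len D (k + 1)) - int (diag_len D k) + (if k = 0 then 1 else 0)"
proof -
  let ?f = "diag_len D"
  have e: "int b - int (a + 1) = k - 1" "int (b + 1) - int a = k + 1"
    "2 \<le> a \<Longrightarrow> int b - int (a - 1) = k + 1" "2 \<le> b \<Longrightarrow> int (b - 1) - int a = k - 1"
    unfolding k by auto
  have cells:
    "(a, b) \<in> D \<longleftrightarrow> min a b \<le> ?f k"
    "(a + 1, b) \<in> D \<longleftrightarrow> min (a + 1) b \<le> ?f (k - 1)"
    "(a, b + 1) \<in> D \<longleftrightarrow> min a (b + 1) \<le> ?f (k + 1)"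
    "2 \<le> a \<Longrightarrow> (a - 1, b) \<in> D \<longleftrightarrow> min (a - 1) b \<le> ?f (k + 1)"
    "2 \<le> b \<Longrightarrow> (a, b - 1) \<in> D \<longleftrightarrow> min a (b - 1) \<le> ?f (k - 1)"
    unfolding mem_young_iff[OF Y] k[symmetric] e using pos by auto
  have steps:
    "int (?f (k - 1)) - int (?f k) - (if 1 \<le> k then 1 else 0) \<in> {0, -1}"
    "int (?f k) - int (?f (k + 1)) - (if 0 \<le> k then 1 else 0) \<in> {0, -1}"
    using boundary_step_cases[OF diag_profile_diag_len[OF Y], of k]
      boundary_step_cases[OF diag_profile_diag_len[OF Y], of "k + 1"]
    unfolding boundary_step_def by auto
  show ?thesis
    unfolding mem_T_op_iff[OF Y res] T_op_cell_arith[OF pos k steps, symmetric]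
    using pos cells by auto
qed

lemma T_op_eq_diag_diagram:
  assumes Y: "is_young D" and il: "i < l"
  shows "T_op l i D = diag_diagram (diag_reflect l i (diag_len D))"
proof (rule set_eqI)
  fix c :: cell
  obtain a b where ab: "c = (a, b)" by force
  define k where "k = int b - int a"
  have res_iff: "has_res l i (a, b) \<longleftrightarrow> k mod int l = int i"
    unfolding has_res_def content_def k_def using il by simp
  show "c \<in> T_op l i D \<longleftrightarrow> c \<in> diag_diagram (diag_reflect l i (diag_len D))"
  proof (cases "has_res l i (a, b) \<and> 1 \<le> a \<and> 1 \<le> b")
    case False
    then show ?thesis
      using mem_T_op_iff[OF Y, of l i a b] mem_T_op_other_res[of l i "(a, b)" D] mem_young_iff[OF Y, of a b]
      by (auto simp: ab diag_diagram_def diag_reflect_def res_iff k_def)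
  next
    case True
    then show ?thesis
      using mem_T_op_diag_iff[OF Y _ _ _ k_def, of l i] res_iff
        of_nat_diag_reflect[OF diag_profile_diag_len[OF Y], of l i k]
      by (auto simp: ab diag_diagram_def k_def)
  qed
qed

text \<open>In boundary coordinates T_i swaps the steps at positions congruent to i and i + 1.\<close>

definition swap_res :: "nat \<Rightarrow> nat \<Rightarrow> int \<Rightarrow> int" where
  "swap_res l i m =
    (if m mod int l = int i then m + 1
     else if m mod int l = (int i + 1) mod int l then m - 1
     else m)"

lemma mod_pred_eq_iff: "(m - 1) mod L = r mod L \<longleftrightarrow> m mod L = (r + 1) mod L"
  for m L r :: int
  by (simp add: mod_eq_dvd_iff algebra_simps)

lemma mod_pred_neq:
  fixes m L r :: int
  assumes "2 \<le> L" "m mod L = r mod L"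
  shows "(m - 1) mod L \<noteq> r mod L"
proof
  assume "(m - 1) mod L = r mod L"
  with assms(2) have "L dvd (m - r) - (m - 1 - r)"
    by (metis dvd_diff mod_eq_dvd_iff)
  then show False
    using assms(1) zdvd_imp_le[of L 1] by simp
qed

lemma boundary_step_diag_reflect:
  assumes P: "diag_profile f" and l: "2 \<le> l" and il: "i < l"
  shows "boundary_step (diag_reflect l i f) m = boundary_step f (swap_res l i m)"
proof -
  have i_mod: "int i mod int l = int i"
    using il by simp
  have pred_iff: "(m - 1) mod int l = int i \<longleftrightarrow> m mod int l = (int i + 1) mod int l"
    using mod_pred_eq_iff[of m "int l" "int i"] i_mod by simp
  note reflect = of_nat_diag_reflect[OF P, of l i]
  consider (cur) "m mod int l = int i"
    | (succ) "m mod int l = (int i + 1) mod int l" "m mod int l \<noteq> int i"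
    | (other) "m mod int l \<noteq> int i" "m mod int l \<noteq> (int i + 1) mod int l"
    by blast
  then show ?thesis
  proof cases
    case cur
    then have "(m - 1) mod int l \<noteq> int i"
      using mod_pred_neq[of "int l" m "int i"] l i_mod by simp
    with cur show ?thesis
      unfolding boundary_step_def reflect swap_res_def by simp
  next
    case succ
    then show ?thesis
      using pred_iff unfolding boundary_step_def reflect swap_res_def by simp
  next
    case other
    then show ?thesis
      using pred_iff unfolding boundary_step_def reflect swap_res_def by simp
  qed
qed

lemma diag_profile_diag_reflect:
  assumes P: "diag_profile f" and l: "2 \<le> l" and il: "i < l"
  shows "diag_profile (diag_reflect l i f)"
  unfolding diag_profile_def
proof
  show "\<forall>k. boundary_step (diag_reflect l i f) k = 0 \<or> boundary_step (diag_reflect l i f) k = -1"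
    using boundary_step_diag_reflect[OF assms] boundary_step_cases[OF P] by simp
  let ?S = "{k. f k \<noteq> 0}"
  have sub: "{k. diag_reflect l i f k \<noteq> 0} \<subseteq> insert 0 (?S \<union> (\<lambda>k. k - 1) -` ?S \<union> (\<lambda>k. k + 1) -` ?S)"
  proof
    fix k assume "k \<in> {k. diag_reflect l i f k \<noteq> 0}"
    with diag_reflect_nonzero[OF P] show "k \<in> insert 0 (?S \<union> (\<lambda>k. k - 1) -` ?S \<union> (\<lambda>k. k + 1) -` ?S)"
      by blast
  qed
  have fin: "finite ?S"
    using P unfolding diag_profile_def by simp
  have "finite ((\<lambda>k. k - 1) -` ?S)" "finite ((\<lambda>k. k + 1) -` ?S)"
    using fin by (rule finite_vimageI, simp add: inj_on_def)+
  with fin have "finite (insert 0 (?S \<union> (\<lambda>k. k - 1) -` ?S \<union> (\<lambda>k. k + 1) -` ?S))"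
    by (metis finite_Un finite_insert)
  with sub show "finite {k. diag_reflect l i f k \<noteq> 0}"
    by (rule finite_subset)
qed

lemma diag_len_T_op:
  assumes "is_young D" "i < l"
  shows "diag_len (T_op l i D) = diag_reflect l i (diag_len D)"
  using T_op_eq_diag_diagram[OF assms] by auto

lemma is_young_T_op:
  assumes "is_young D" "2 \<le> l" "i < l"
  shows "is_young (T_op l i D)"
  unfolding T_op_eq_diag_diagram[OF assms(1,3)]
  using assms diag_profile_diag_len diag_profile_diag_reflect is_young_diag_diagram by blast

section \<open>Residue counts\<close>

lemma N_cnt_T_op_other_res:
  assumes "j < l" "i < l" "j \<noteq> i"
  shows "N_cnt l j (T_op l i D) = N_cnt l j D"
proof -
  have "\<not> has_res l i c" if "has_res l j c" for c
    using that assms unfolding has_res_def by simp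
  then have "{c\<in>T_op l i D. has_res l j c} = {c\<in>D. has_res l j c}"
    using mem_T_op_other_res by blast
  then show ?thesis
    unfolding N_cnt_def by simp
qed

lemma N_cnt_eq_sum_diag_len:
  assumes Y: "is_young D" and K: "finite K" and supp: "\<And>k. diag_len D k \<noteq> 0 \<Longrightarrow> k \<in> K"
  shows "N_cnt l j D = (\<Sum>k\<in>{k\<in>K. k mod int l = int j mod int l}. int (diag_len D k))"
proof -
  define I where "I = {k\<in>K. k mod int l = int j mod int l}"
  have fin: "finite D"
    using young_finite[OF Y] .
  have "{c\<in>D. has_res l j c} = (\<Union>k\<in>I. {c\<in>D. content c = k})"
  proof (intro equalityI subsetI)
    fix c assume c: "c \<in> {c\<in>D. has_res l j c}"
    then have "{c'\<in>D. content c' = content c} \<noteq> {}"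
      by blast
    then have "diag_len D (content c) \<noteq> 0"
      unfolding diag_len_def using fin by simp
    then show "c \<in> (\<Union>k\<in>I. {c\<in>D. content c = k})"
      using c supp unfolding I_def has_res_def by auto
  qed (auto simp: I_def has_res_def)
  moreover have "card (\<Union>k\<in>I. {c\<in>D. content c = k}) = (\<Sum>k\<in>I. diag_len D k)"
    unfolding diag_len_def using K fin by (intro card_UN_disjoint) (auto simp: I_def)
  ultimately show ?thesis
    unfolding N_cnt_def I_def by simp
qed

lemma sum_residue_class_shift:
  fixes h :: "int \<Rightarrow> 'a::comm_monoid_add" and K :: "int set" and L r d :: int
  assumes K: "finite K" and supp: "\<And>k. h k \<noteq> 0 \<Longrightarrow> k \<in> K \<and> k - d \<in> K"
  shows "(\<Sum>k\<in>{k\<in>K. k mod L = r mod L}. h (k + d)) = (\<Sum>k\<in>{k\<in>K. k mod L = (r + d) mod L}. h k)"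
proof -
  let ?g = "\<lambda>k. if k mod L = (r + d) mod L then h k else 0"
  have "(\<Sum>k\<in>{k\<in>K. k mod L = r mod L}. h (k + d)) = (\<Sum>k\<in>K. ?g (k + d))"
    using K by (simp add: sum.inter_filter mod_eq_dvd_iff algebra_simps)
  also have "\<dots> = (\<Sum>k\<in>(\<lambda>k. k + d) ` K. ?g k)"
    by (simp add: sum.reindex)
  also have "\<dots> = (\<Sum>k\<in>K \<inter> (\<lambda>k. k + d) ` K. ?g k)"
    using K supp by (intro sum.mono_neutral_right) auto
  also have "\<dots> = (\<Sum>k\<in>K. ?g k)"
  proof (intro sum.mono_neutral_left K ballI)
    fix k assume "k \<in> K - K \<inter> (\<lambda>k. k + d) ` K"
    then have "h k = 0"
      using supp[of k] rev_image_eqI[of "k - d" K k "\<lambda>k. k + d"] by auto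
    then show "?g k = 0"
      by simp
  qed auto
  also have "\<dots> = (\<Sum>k\<in>{k\<in>K. k mod L = (r + d) mod L}. h k)"
    using K by (simp add: sum.inter_filter)
  finally show ?thesis .
qed

lemma finite_int_set_abs_bound:
  fixes S :: "int set"
  assumes "finite S"
  obtains M where "0 < M" "\<And>k. k \<in> S \<Longrightarrow> \<bar>k\<bar> < M"
proof
  show "0 < (\<Sum>k\<in>S. \<bar>k\<bar>) + 1"
    by (simp add: sum_nonneg add_nonneg_pos)
  show "\<bar>k\<bar> < (\<Sum>k\<in>S. \<bar>k\<bar>) + 1" if "k \<in> S" for k
    using member_le_sum[of k S abs] assms that by simp
qed

lemma of_nat_mod_succ_residue: "int ((i + 1) mod l) mod int l = (int i + 1) mod int l"
  by (simp add: of_nat_mod add.commute)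

lemma of_nat_mod_pred_residue:
  assumes "0 < l"
  shows "int ((i + l - 1) mod l) mod int l = (int i - 1) mod int l"
proof -
  have "int ((i + l - 1) mod l) = (int i + int l - 1) mod int l"
    using assms by (simp add: of_nat_mod of_nat_diff)
  also have "int i + int l - 1 = (int i - 1) + int l"
    by simp
  also have "((int i - 1) + int l) mod int l = (int i - 1) mod int l"
    by (rule mod_add_self2)
  finally show ?thesis
    by simp
qed

lemma sum_residue_class_indicator_zero:
  assumes "finite K" "0 \<in> K" "i < l"
  shows "(\<Sum>k\<in>{k\<in>K. k mod int l = int i mod int l}. if k = 0 then 1 else 0) = (if i = 0 then 1 else (0::int))"
proof -
  have "finite {k\<in>K. k mod int l = int i mod int l}"
    using assms(1) by simp
  then show ?thesis
    using assms by (subst sum.delta) auto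
qed

lemma N_cnt_T_op_same_res:
  assumes Y: "is_young D" and l: "2 \<le> l" and il: "i < l"
  shows "N_cnt l i (T_op l i D) = N_cnt l ((i + 1) mod l) D + N_cnt l ((i + l - 1) mod l) D
    - N_cnt l i D + (if i = 0 then 1 else 0)"
proof -
  have "0 < l"
    using l by simp
  define f where "f = diag_len D"
  have P: "diag_profile f"
    unfolding f_def using diag_profile_diag_len[OF Y] .
  obtain M where M: "0 < M" "\<And>k. f k \<noteq> 0 \<Longrightarrow> \<bar>k\<bar> < M"
    using P finite_int_set_abs_bound[of "{k. f k \<noteq> 0}"] unfolding diag_profile_def by auto
  define K where "K = {-M - 1..M + 1}"
  let ?res = "\<lambda>r. {k\<in>K. k mod int l = r mod int l}"
  have "k \<in> K" if "f k \<noteq> 0" for k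
    using M(2)[OF that] unfolding K_def by auto
  then have N_D: "N_cnt l j D = (\<Sum>k\<in>?res (int j). int (f k))" for j
    unfolding f_def using N_cnt_eq_sum_diag_len[OF Y, of K] by (simp add: K_def f_def)
  have "k \<in> K" if "diag_reflect l i f k \<noteq> 0" for k
    using diag_reflect_nonzero[OF P that] M unfolding K_def by fastforce
  then have N_T: "N_cnt l i (T_op l i D) = (\<Sum>k\<in>?res (int i). int (diag_reflect l i f k))"
    using N_cnt_eq_sum_diag_len[OF is_young_T_op[OF Y l il], of K l i]
    unfolding diag_len_T_op[OF Y il] f_def[symmetric] by (simp add: K_def)
  have shift: "(\<Sum>k\<in>?res (int i). int (f (k + d))) = (\<Sum>k\<in>?res (int i + d). int (f k))"
    if "\<bar>d\<bar> \<le> 1" for d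
  proof (rule sum_residue_class_shift)
    fix k assume "int (f k) \<noteq> 0"
    then have "\<bar>k\<bar> < M"
      using M(2) by simp
    then show "k \<in> K \<and> k - d \<in> K"
      using that unfolding K_def by auto
  qed (simp add: K_def)
  have "N_cnt l i (T_op l i D) =
      (\<Sum>k\<in>?res (int i). int (f (k + -1)) + int (f (k + 1)) - int (f k) + (if k = 0 then 1 else 0))"
    unfolding N_T using il by (intro sum.cong refl) (simp add: of_nat_diag_reflect[OF P])
  also have "\<dots> = (\<Sum>k\<in>?res (int i). int (f (k + -1))) + (\<Sum>k\<in>?res (int i). int (f (k + 1)))
      - (\<Sum>k\<in>?res (int i). int (f k)) + (\<Sum>k\<in>?res (int i). if k = 0 then 1 else 0)"
    by (simp add: sum.distrib sum_subtractf)
  also have "(\<Sum>k\<in>?res (int i). if k = 0 then 1 else 0) = (if i = 0 then 1 else (0::int))"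
    using sum_residue_class_indicator_zero[of K i l] M(1) il by (simp add: K_def)
  also have "(\<Sum>k\<in>?res (int i). int (f (k + -1))) = (\<Sum>k\<in>?res (int i + -1). int (f k))"
    by (rule shift) simp
  also have "(\<Sum>k\<in>?res (int i). int (f (k + 1))) = (\<Sum>k\<in>?res (int i + 1). int (f k))"
    by (rule shift) simp
  finally show ?thesis
    unfolding N_D of_nat_mod_succ_residue of_nat_mod_pred_residue[OF \<open>0 < l\<close>] by simp
qed

lemma dvec_T_op:
  assumes "is_young D" "2 \<le> l" "i < l"
  shows "dvec l (T_op l i D) = sigma_vec l i (dvec l D)"
proof (rule nth_equalityI)
  show "length (dvec l (T_op l i D)) = length (sigma_vec l i (dvec l D))"
    unfolding dvec_def sigma_vec_def by simp
  fix j assume "j < length (dvec l (T_op l i D))"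
  then have j: "j < l"
    unfolding dvec_def by simp
  have "(i + 1) mod l < l" "(i + l - 1) mod l < l"
    using assms by auto
  then show "dvec l (T_op l i D) ! j = sigma_vec l i (dvec l D) ! j"
    using j assms N_cnt_T_op_same_res[OF assms] N_cnt_T_op_other_res[of j l i D]
    unfolding dvec_def sigma_vec_def by (cases "j = i") simp_all
qed

section \<open>Rim hooks and cores\<close>

lemma adjacent_content: "adjacent x y \<Longrightarrow> content y = content x + 1 \<or> content y = content x - 1"
  unfolding adjacent_def content_def by auto

lemma edge_connected_content_interval:
  assumes conn: "edge_connected S" and fin: "finite S" and ne: "S \<noteq> {}"
  shows "content ` S = {Min (content ` S)..Max (content ` S)}"
proof (intro equalityI subsetI)
  let ?R = "\<lambda>x y. x \<in> S \<and> y \<in> S \<and> adjacent x y"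
  have between: "k \<in> content ` S"
    if "x \<in> S" "?R\<^sup>*\<^sup>* x y" "min (content x) (content y) \<le> k" "k \<le> max (content x) (content y)"
    for x y k
    using that(2-)
  proof (induction arbitrary: k rule: rtranclp_induct)
    case base
    then show ?case using \<open>x \<in> S\<close> by auto
  next
    case (step y z)
    show ?case
    proof (cases "k = content z")
      case False
      then show ?thesis
        using step adjacent_content[of y z] by auto
    qed (use step in auto)
  qed
  fix k assume "k \<in> {Min (content ` S)..Max (content ` S)}"
  moreover have "Min (content ` S) \<in> content ` S" "Max (content ` S) \<in> content ` S"
    using fin ne by auto
  then obtain x y where "x \<in> S" "y \<in> S" "content x = Min (content ` S)" "content y = Max (content ` S)"
    by (metis imageE)
  ultimately show "k \<in> content ` S"
    using between[of x y k] conn unfolding edge_connected_def by auto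
qed (use fin in auto)

lemma rim_hook_inj_on_content:
  assumes Y: "is_young D" and H: "is_rim_hook D S"
  shows "inj_on content S"
proof -
  have YE: "is_young (D - S)" and SD: "S \<subseteq> D"
    and no_square: "\<not> (\<exists>i j. (i, j) \<in> S \<and> (i + 1, j) \<in> S \<and> (i, j + 1) \<in> S \<and> (i + 1, j + 1) \<in> S)"
    using H unfolding is_rim_hook_def by auto
  text \<open>Two cells of S on one diagonal would force the whole square spanned by the upper one into S.\<close>
  have same_diag: False if "(a, b) \<in> S" "(a', b') \<in> S" "content (a, b) = content (a', b')" "a < a'" for a b a' b'
  proof -
    have "b < b'"
      using that unfolding content_def by auto
    have pos: "1 \<le> a" "1 \<le> b"
      using young_cell_pos[OF Y, of a b] that SD by auto
    have "(a + 1, b) \<in> D" "(a, b + 1) \<in> D" "(a + 1, b + 1) \<in> D"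
      using young_downward[OF Y, of a' b'] that SD \<open>b < b'\<close> pos by auto
    moreover have "(a + 1, b) \<notin> D - S" "(a, b + 1) \<notin> D - S" "(a + 1, b + 1) \<notin> D - S"
      using young_downward[OF YE, of _ _ a b] that pos by force+
    ultimately show False
      using no_square that by blast
  qed
  show ?thesis
  proof (rule inj_onI)
    fix x y assume xy: "x \<in> S" "y \<in> S" "content x = content y"
    obtain a b a' b' where x: "x = (a, b)" and y: "y = (a', b')"
      by (cases x, cases y)
    consider "a < a'" | "a' < a" | "a = a'"
      by linarith
    then show "x = y"
      using same_diag[of a b a' b'] same_diag[of a' b' a b] xy unfolding x y
      by cases (auto simp: content_def)
  qed
qed

lemma diag_len_Diff:
  assumes fin: "finite D" and SD: "S \<subseteq> D" and inj: "inj_on content S"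
  shows "int (diag_len (D - S) k) = int (diag_len D k) - (if k \<in> content ` S then 1 else 0)"
proof -
  have split: "{c\<in>D - S. content c = k} = {c\<in>D. content c = k} - {c\<in>S. content c = k}"
    by auto
  have sub: "{c\<in>S. content c = k} \<subseteq> {c\<in>D. content c = k}"
    using SD by auto
  have "card {c\<in>S. content c = k} = (if k \<in> content ` S then 1 else 0)"
  proof (cases "k \<in> content ` S")
    case True
    then obtain x where "x \<in> S" "k = content x"
      by blast
    then have "{c\<in>S. content c = k} = {x}"
      using inj unfolding inj_on_def by auto
    then show ?thesis
      using True by simp
  next
    case False
    then have "{c\<in>S. content c = k} = {}"
      by blast
    then show ?thesis
      by (simp only: card.empty if_not_P[OF False])
  qed
  moreover have "card {c\<in>S. content c = k} \<le> card {c\<in>D. content c = k}"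
    using card_mono[OF _ sub] fin by simp
  ultimately show ?thesis
    unfolding diag_len_def split using card_Diff_subset[OF finite_subset[OF sub] sub] fin
    by (simp add: of_nat_diff)
qed

lemma rim_hook_boundary_steps:
  assumes Y: "is_young D" and H: "is_rim_hook D S" and card: "card S = l"
  obtains c where "boundary_step (diag_len D) (c + 1) = 0"
    "boundary_step (diag_len D) (c + 1 - int l) = -1"
proof -
  have SD: "S \<subseteq> D" and ne: "S \<noteq> {}" and YE: "is_young (D - S)" and conn: "edge_connected S"
    using H unfolding is_rim_hook_def by auto
  have fin: "finite S"
    using SD young_finite[OF Y] finite_subset by blast
  have inj: "inj_on content S"
    using rim_hook_inj_on_content[OF Y H] .
  define lo where "lo = Min (content ` S)"
  define hi where "hi = Max (content ` S)"
  have interval: "content ` S = {lo..hi}"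
    unfolding lo_def hi_def using edge_connected_content_interval[OF conn fin ne] .
  have "1 \<le> l"
    using card fin ne card_gt_0_iff[of S] by simp
  moreover have "nat (hi + 1 - lo) = l"
    using card_image[OF inj] card interval by simp
  ultimately have lo: "lo = hi + 1 - int l"
    by linarith
  have E: "int (diag_len (D - S) k) = int (diag_len D k) - (if k \<in> {lo..hi} then 1 else 0)" for k
    using diag_len_Diff[OF young_finite[OF Y] SD inj] interval by simp
  have "boundary_step (diag_len (D - S)) (hi + 1) = boundary_step (diag_len D) (hi + 1) - 1"
    "boundary_step (diag_len (D - S)) lo = boundary_step (diag_len D) lo + 1"
    unfolding boundary_step_def E using lo \<open>1 \<le> l\<close> by auto
  then have "boundary_step (diag_len D) (hi + 1) = 0" "boundary_step (diag_len D) lo = -1"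
    using boundary_step_cases[OF diag_profile_diag_len[OF Y], of "hi + 1"]
      boundary_step_cases[OF diag_profile_diag_len[OF Y], of lo]
      boundary_step_cases[OF diag_profile_diag_len[OF YE], of "hi + 1"]
      boundary_step_cases[OF diag_profile_diag_len[OF YE], of lo]
    by auto
  with lo show thesis
    using that[of hi] by simp
qed

lemma diag_profile_antimono_right:
  assumes P: "diag_profile f" and "0 \<le> k" "k \<le> k'"
  shows "f k' \<le> f k"
proof -
  have "f (k + int n) \<le> f k" for n
  proof (induction n)
    case (Suc n)
    have "f (k + int n + 1) \<le> f (k + int n)"
      using boundary_step_cases[OF P, of "k + int n + 1"] \<open>0 \<le> k\<close>
      unfolding boundary_step_def by (auto split: if_splits)
    moreover have "k + int (Suc n) = k + int n + 1"
      by simp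
    ultimately show ?case
      using Suc.IH by (simp only:)
  qed simp
  from this[of "nat (k' - k)"] show ?thesis
    using \<open>k \<le> k'\<close> by simp
qed

lemma diag_profile_mono_left:
  assumes P: "diag_profile f" and "k \<le> 0" "k' \<le> k"
  shows "f k' \<le> f k"
proof -
  have "f (k - int n) \<le> f k" for n
  proof (induction n)
    case (Suc n)
    have "f (k - int n - 1) \<le> f (k - int n)"
      using boundary_step_cases[OF P, of "k - int n"] \<open>k \<le> 0\<close>
      unfolding boundary_step_def by (auto split: if_splits)
    with Suc show ?case
      by (simp add: algebra_simps)
  qed simp
  from this[of "nat (k - k')"] show ?thesis
    using \<open>k' \<le> k\<close> by simp
qed

lemma diag_profile_pos_between_steps:
  assumes P: "diag_profile f" and hi: "boundary_step f (hi + 1) = 0" and lo: "boundary_step f lo = -1"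
    and k: "lo \<le> k" "k \<le> hi"
  shows "1 \<le> f k"
proof (rule ccontr)
  assume "\<not> 1 \<le> f k"
  then have zero: "f k = 0"
    by simp
  show False
  proof (cases "0 \<le> k")
    case True
    then have "f hi = 0" "f (hi + 1) = 0"
      using diag_profile_antimono_right[OF P True, of hi] diag_profile_antimono_right[OF P True, of "hi + 1"]
        zero k by auto
    then show False
      using hi k True unfolding boundary_step_def by simp
  next
    case False
    then have "f (lo - 1) = 0" "f lo = 0"
      using diag_profile_mono_left[OF P, of k "lo - 1"] diag_profile_mono_left[OF P, of k lo] zero k by auto
    then show False
      using lo k False unfolding boundary_step_def by simp
  qed
qed

lemma diag_profile_remove_strip:
  assumes P: "diag_profile f" and hi: "boundary_step f (hi + 1) = 0" and lo: "boundary_step f lo = -1"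
  shows "diag_profile (\<lambda>k. f k - (if k \<in> {lo..hi} then 1 else 0))" (is "diag_profile ?g")
  unfolding diag_profile_def
proof
  have g: "int (?g k) = int (f k) - (if k \<in> {lo..hi} then 1 else 0)" for k
    using diag_profile_pos_between_steps[OF P hi lo, of k] by auto
  show "\<forall>k. boundary_step ?g k = 0 \<or> boundary_step ?g k = -1"
  proof
    fix k
    have "boundary_step ?g k = boundary_step f k - (if k - 1 \<in> {lo..hi} then 1 else 0)
        + (if k \<in> {lo..hi} then 1 else 0)"
      unfolding boundary_step_def g by simp
    moreover have "k = hi + 1 \<or> k = lo \<or> (k - 1 \<in> {lo..hi} \<longleftrightarrow> k \<in> {lo..hi})"
      by auto
    ultimately show "boundary_step ?g k = 0 \<or> boundary_step ?g k = -1"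
      using boundary_step_cases[OF P, of k] hi lo by auto
  qed
  have "{k. ?g k \<noteq> 0} \<subseteq> {k. f k \<noteq> 0}"
    by auto
  then show "finite {k. ?g k \<noteq> 0}"
    using P finite_subset unfolding diag_profile_def by blast
qed

lemma adjacent_diag_ends:
  assumes P: "diag_profile f" and "1 \<le> f k" "1 \<le> f (k + 1)"
  shows "adjacent (diag_cell k (f k)) (diag_cell (k + 1) (f (k + 1)))"
  using boundary_step_cases[OF P, of "k + 1"] assms(2,3)
  unfolding boundary_step_def adjacent_def diag_cell_def
  by (cases "0 \<le> k") (auto split: if_splits)

lemma edge_connected_chain:
  fixes g :: "int \<Rightarrow> cell"
  assumes adj: "\<And>k. lo \<le> k \<Longrightarrow> k < hi \<Longrightarrow> adjacent (g k) (g (k + 1))"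
  shows "edge_connected (g ` {lo..hi})"
proof -
  let ?S = "g ` {lo..hi}"
  let ?R = "\<lambda>x y. x \<in> ?S \<and> y \<in> ?S \<and> adjacent x y"
  have sym: "adjacent x y \<Longrightarrow> adjacent y x" for x y
    unfolding adjacent_def by auto
  have path: "?R\<^sup>*\<^sup>* (g k) (g (k + int n)) \<and> ?R\<^sup>*\<^sup>* (g (k + int n)) (g k)"
    if "lo \<le> k" "k + int n \<le> hi" for k n
    using that(2)
  proof (induction n)
    case (Suc n)
    then have step: "?R (g (k + int n)) (g (k + int n + 1))" "?R (g (k + int n + 1)) (g (k + int n))"
      using adj[of "k + int n"] sym \<open>lo \<le> k\<close> by auto
    have IH: "?R\<^sup>*\<^sup>* (g k) (g (k + int n))" "?R\<^sup>*\<^sup>* (g (k + int n)) (g k)"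
      using Suc by simp_all
    have e: "k + int (Suc n) = k + int n + 1"
      by simp
    show ?case
      unfolding e using rtranclp.rtrancl_into_rtrancl[OF IH(1) step(1)]
        converse_rtranclp_into_rtranclp[OF step(2) IH(2)] by (rule conjI)
  qed simp
  show ?thesis
    unfolding edge_connected_def
  proof (intro ballI)
    fix x y assume "x \<in> ?S" "y \<in> ?S"
    then obtain k k' where "x = g k" "y = g k'" "k \<in> {lo..hi}" "k' \<in> {lo..hi}"
      by blast
    then show "?R\<^sup>*\<^sup>* x y"
      using path[of k "nat (k' - k)"] path[of k' "nat (k - k')"] by (cases "k \<le> k'") auto
  qed
qed

lemma boundary_steps_imp_rim_hook:
  assumes Y: "is_young D" and l: "1 \<le> l"
    and hi: "boundary_step (diag_len D) (c + 1) = 0"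
    and lo: "boundary_step (diag_len D) (c + 1 - int l) = -1"
  shows "\<exists>S. is_rim_hook D S \<and> card S = l"
proof -
  define f where "f = diag_len D"
  define J where "J = {c + 1 - int l..c}"
  have P: "diag_profile f"
    unfolding f_def using diag_profile_diag_len[OF Y] .
  have pos: "1 \<le> f k" if "k \<in> J" for k
    using diag_profile_pos_between_steps[OF P, of c "c + 1 - int l" k] hi lo that
    unfolding f_def J_def by simp
  define g where "g k = f k - (if k \<in> J then 1 else 0)" for k
  have Pg: "diag_profile g"
    unfolding g_def J_def using diag_profile_remove_strip[OF P] hi lo unfolding f_def by simp
  define S where "S = (\<lambda>k. diag_cell k (f k)) ` J"
  have D: "D = diag_diagram f"
    unfolding f_def using young_eq_diag_diagram[OF Y] .
  have mem_S: "(a, b) \<in> S \<longleftrightarrow> int b - int a \<in> J \<and> min a b = f (int b - int a)" for a b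
    unfolding S_def image_iff by (auto simp: diag_cell_eq_iff)
  have SD: "S \<subseteq> D"
    unfolding S_def D diag_diagram_def diag_cell_def by (auto dest!: pos)
  have "D - S = diag_diagram g"
    unfolding D by (auto simp: diag_diagram_def mem_S g_def)
  then have YE: "is_young (D - S)"
    using is_young_diag_diagram[OF Pg] by simp
  have inj: "inj_on (\<lambda>k. diag_cell k (f k)) J"
    by (rule inj_onI) (metis content_diag_cell)
  have card: "card S = l"
    using card_image[OF inj] unfolding S_def by (simp add: J_def)
  have conn: "edge_connected S"
    using adjacent_diag_ends[OF P] pos unfolding S_def J_def by (intro edge_connected_chain) auto
  have no_square: "\<not> (\<exists>i j. (i, j) \<in> S \<and> (i + 1, j) \<in> S \<and> (i, j + 1) \<in> S \<and> (i + 1, j + 1) \<in> S)"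
    unfolding mem_S by auto
  have "is_rim_hook D S"
    unfolding is_rim_hook_def using SD YE conn no_square card l by auto
  with card show ?thesis
    by blast
qed

lemma swap_res_diff_period: "swap_res l i (m - int l) = swap_res l i m - int l"
  unfolding swap_res_def by (simp add: mod_diff_right_eq[symmetric])

lemma is_core_T_op:
  assumes C: "is_core l \<nu>" and l: "2 \<le> l" and il: "i < l"
  shows "is_core l (T_op l i \<nu>)"
proof -
  have Y: "is_young \<nu>"
    using C unfolding is_core_def by simp
  have YT: "is_young (T_op l i \<nu>)"
    using is_young_T_op[OF Y l il] .
  have "\<not> is_rim_hook (T_op l i \<nu>) S" if card: "card S = l" for S
  proof
    assume "is_rim_hook (T_op l i \<nu>) S"
    then obtain c where
      "boundary_step (diag_reflect l i (diag_len \<nu>)) (c + 1) = 0"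
      "boundary_step (diag_reflect l i (diag_len \<nu>)) (c + 1 - int l) = -1"
      using rim_hook_boundary_steps[OF YT _ card] unfolding diag_len_T_op[OF Y il] by blast
    then have "boundary_step (diag_len \<nu>) (swap_res l i (c + 1)) = 0"
      "boundary_step (diag_len \<nu>) (swap_res l i (c + 1) - int l) = -1"
      unfolding boundary_step_diag_reflect[OF diag_profile_diag_len[OF Y] l il]
        swap_res_diff_period[symmetric] by (simp_all add: algebra_simps)
    then have "\<exists>S. is_rim_hook \<nu> S \<and> card S = l"
      using boundary_steps_imp_rim_hook[OF Y, of l "swap_res l i (c + 1) - 1"] l by simp
    then show False
      using C unfolding is_core_def by blast
  qed
  with YT show ?thesis
    unfolding is_core_def by blast
qed

theorem proposition4p11:
  fixes l :: nat
  assumes "l > 1"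
  shows "(\<forall>D i. is_young D \<and> i < l \<longrightarrow> dvec l (T_op l i D) = sigma_vec l i (dvec l D))
       \<and> (\<forall>\<nu> i. is_core l \<nu> \<and> i < l \<longrightarrow>
            is_core l (T_op l i \<nu>) \<and> dvec l \<nu> \<in> Z_heart l \<and>
            dvec l (T_op l i \<nu>) = sigma_vec l i (dvec l \<nu>) \<and>
            sigma_vec l i (dvec l \<nu>) \<in> Z_heart l)"
proof (intro conjI allI impI)
  have l: "2 \<le> l"
    using assms by simp
  show "dvec l (T_op l i D) = sigma_vec l i (dvec l D)" if "is_young D \<and> i < l" for D i
    using dvec_T_op[OF _ l] that by blast
  fix \<nu> i assume core: "is_core l \<nu> \<and> i < l"
  then have Y: "is_young \<nu>"
    unfolding is_core_def by simp
  show core_T: "is_core l (T_op l i \<nu>)"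
    using is_core_T_op[OF _ l] core by blast
  show "dvec l \<nu> \<in> Z_heart l"
    unfolding Z_heart_def using core by blast
  show eq: "dvec l (T_op l i \<nu>) = sigma_vec l i (dvec l \<nu>)"
    using dvec_T_op[OF Y l] core by blast
  show "sigma_vec l i (dvec l \<nu>) \<in> Z_heart l"
    unfolding Z_heart_def eq[symmetric] using core_T by blast
qed

end
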